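(* Let $c$ be continuous and satisfy (C1)–(C3). Let $0\le\overline h\in L^\infty(\mathbb{R}^d\times\mathbb{R}^d)$ have compact support and let $0\le f,g\in L^1_c(\mathbb{R}^d)$ with $\Gamma(f,g)^{\overline h}\ne\emptyset$. Then $I_c$ has at most one minimizer on $\Gamma(f,g)^{\overline h}$ (as an element of $L^1(\mathbb{R}^d\times\mathbb{R}^d)$); combined with existence, the minimizer is unique.
   Context: Cost assumptions: (C1) $c$ is bounded; (C2) there is a Lebesgue-negligible closed set $Z\subset\mathbb{R}^d\times\mathbb{R}^d$ with $c\in C^2((\mathbb{R}^d\times\mathbb{R}^d)\setminus Z)$; (C3) $\det D^2_{xy}c(x,y)\ne0$ for all $(x,y)\notin Z$, where $D^2_{xy}c=(\partial^2c/\partial x_i\partial y_j)_{i,j}$. $L^1_c$: integrable functions with compact support. $\Gamma(f,g)$: the $0\le h\in L^1_c(\mathbb{R}^d\times\mathbb{R}^d)$ with $\int h(x,y)dy=f(x)$ and $\int h(x,y)dx=g(y)$ a.e.; $\Gamma(f,g)^{\overline h}:=\{h\in\Gamma(f,g):h\le\overline h\text{ a.e.}\}$. $I_c(h):=\int c\,h\,dx\,dy$. *)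

theory Defs
  imports "HOL-Analysis.Analysis"
begin

text \<open>Points of R^d x R^d are pairs (x,y) with x, y :: real^'n (d = CARD('n)).
  Lebesgue measure on R^d x R^d is the measure lebesgue on the product type.\<close>

type_synonym 'n pt = "(real ^ 'n) \<times> (real ^ 'n)"

text \<open>(C2)+(C3): c is C^2 on the open set U (first derivative D1, second derivative D2,
  the latter continuous), and the mixed Hessian D^2_{xy} c has nonzero determinant on U.
  The mixed second partial d^2 c / dx_i dy_j at z is D2 z applied to (e_i,0) and (0,e_j).\<close>

definition C2_nondeg_on :: "'n::finite pt set \<Rightarrow> ('n pt \<Rightarrow> real) \<Rightarrow> bool" where
  "C2_nondeg_on U c \<longleftrightarrow>
     (\<exists>D1 :: 'n pt \<Rightarrow> ('n pt \<Rightarrow>\<^sub>L real).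
      \<exists>D2 :: 'n pt \<Rightarrow> ('n pt \<Rightarrow>\<^sub>L ('n pt \<Rightarrow>\<^sub>L real)).
        (\<forall>z\<in>U. (c has_derivative blinfun_apply (D1 z)) (at z)) \<and>
        (\<forall>z\<in>U. (D1 has_derivative blinfun_apply (D2 z)) (at z)) \<and>
        continuous_on U D2 \<and>
        (\<forall>z\<in>U. det (\<chi> i j. blinfun_apply (blinfun_apply (D2 z) (axis i 1, 0)) (0, axis j 1)) \<noteq> 0))"

definition cost_assumptions :: "('n::finite pt \<Rightarrow> real) \<Rightarrow> bool" where
  "cost_assumptions c \<longleftrightarrow>
     bounded (range c) \<and>
     (\<exists>Z. closed Z \<and> negligible Z \<and> C2_nondeg_on (- Z) c)"

definition L1c :: "('a::euclidean_space \<Rightarrow> real) \<Rightarrow> bool" where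
  "L1c f \<longleftrightarrow> integrable lebesgue f \<and>
     (\<exists>K. compact K \<and> (AE z in lebesgue. z \<notin> K \<longrightarrow> f z = 0))"

definition Gamma :: "(real^'n::finite \<Rightarrow> real) \<Rightarrow> (real^'n \<Rightarrow> real) \<Rightarrow> ('n pt \<Rightarrow> real) set" where
  "Gamma f g = {h. L1c h \<and> (AE z in lebesgue. 0 \<le> h z) \<and>
      (AE x in lebesgue. (\<integral>y. h (x, y) \<partial>lebesgue) = f x) \<and>
      (AE y in lebesgue. (\<integral>x. h (x, y) \<partial>lebesgue) = g y)}"

definition Gamma_bar :: "(real^'n::finite \<Rightarrow> real) \<Rightarrow> (real^'n \<Rightarrow> real) \<Rightarrow> ('n pt \<Rightarrow> real)
     \<Rightarrow> ('n pt \<Rightarrow> real) set" where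
  "Gamma_bar f g hb = {h \<in> Gamma f g. AE z in lebesgue. h z \<le> hb z}"

definition I_c :: "('n::finite pt \<Rightarrow> real) \<Rightarrow> ('n pt \<Rightarrow> real) \<Rightarrow> real" where
  "I_c c h = (\<integral>z. c z * h z \<partial>lebesgue)"

definition is_minimizer :: "('n::finite pt \<Rightarrow> real) \<Rightarrow> ('n pt \<Rightarrow> real) set \<Rightarrow> ('n pt \<Rightarrow> real) \<Rightarrow> bool" where
  "is_minimizer c S h \<longleftrightarrow> h \<in> S \<and> (\<forall>h'\<in>S. I_c c h \<le> I_c c h')"

end

theory Submission
  imports Defs
begin

(* If h1 and h2 are minimizers, so is their midpoint h, since Gamma_bar f g hb is
   convex and I_c is linear.  Every minimizer h is "bang-bang": almost everywhere h = 0 or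
   h = hb.  Otherwise, for some eps > 0, the set S where eps <= h <= hb - eps has positive
   measure.  S meets in positive measure a ball on which an entry of the mixed Hessian
   D^2_xy c has a constant sign, and a Steinhaus-type argument yields compact sets
   F <= K <= S, F of positive measure, with F - (a,0), F - (0,b), F - (a,b) <= K for small
   steps a, b along basis vectors.  The rectangular second difference phi of the indicator
   of F is supported in K and has vanishing marginals, so h + d*phi stays admissible for
   small |d|; and by duality the integral of c*phi is the integral over F of the second
   difference of c, which has a strict sign by the mean value theorem.  Choosing the sign
   of d decreases I_c, a contradiction.  Finally, if the midpoint of h1, h2 takes only the
   values 0 and hb while 0 <= h1, h2 <= hb, then h1 = h2 almost everywhere. *)

lemma lebesgue_translate:
  "distr lebesgue lebesgue (\<lambda>x. t + x) = (lebesgue :: 'a::euclidean_space measure)"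
proof -
  have eq: "(\<lambda>x::'a. t + (\<Sum>j\<in>Basis. (1 * (x \<bullet> j)) *\<^sub>R j)) = (\<lambda>x. t + x)"
    by (simp add: euclidean_representation)
  have "(lebesgue::'a measure) =
      density (distr lebesgue lebesgue (\<lambda>x. t + x)) (\<lambda>_. (\<Prod>j\<in>(Basis::'a set). \<bar>1::real\<bar>))"
    using lebesgue_affine_euclidean[of "\<lambda>_. 1" t] unfolding eq by simp
  then show ?thesis by (simp add: density_1)
qed

lemma translate_measurable: "(\<lambda>x. t + x) \<in> (lebesgue :: 'a::euclidean_space measure) \<rightarrow>\<^sub>M lebesgue"
  using lebesgue_affine_measurable[of "\<lambda>_. 1" t] by (simp add: euclidean_representation)

lemma
  fixes f :: "'a::euclidean_space \<Rightarrow> real"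
  assumes "f \<in> borel_measurable lebesgue"
  shows integral_translate: "(\<integral>x. f (t + x) \<partial>lebesgue) = (\<integral>x. f x \<partial>lebesgue)"
    and integrable_translate: "integrable lebesgue (\<lambda>x. f (t + x)) \<longleftrightarrow> integrable lebesgue f"
  using integral_distr[OF translate_measurable assms, of t]
    integrable_distr_eq[OF translate_measurable assms, of t] lebesgue_translate[of t]
  by simp_all

text \<open>Since Lebesgue measure is the completion of the Borel product measure, we pass
  through a Borel representative and Fubini's theorem for the product of Borel measures.\<close>

lemma integrable_lebesgue_if_AE_lborel:
  fixes g h :: "'a::euclidean_space \<Rightarrow> real"
  assumes "g \<in> borel_measurable lborel" "integrable lborel g" "AE y in lborel. h y = g y"
  shows "integrable lebesgue h"
proof -
  have ae: "AE y in lebesgue. g y = h y"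
    using AE_completion[OF assms(3)] by (auto elim: AE_mp)
  have "h \<in> borel_measurable lebesgue"
    using borel_measurable_AE[OF _ ae] assms(1) by (simp add: measurable_completion)
  moreover have "integrable lebesgue g"
    using assms(1,2) by (simp add: integrable_completion)
  ultimately show ?thesis
    using integrable_cong_AE_imp ae by blast
qed

lemma borel_representative_sections:
  fixes h :: "('a::euclidean_space \<times> 'b::euclidean_space) \<Rightarrow> real"
  assumes "h \<in> borel_measurable lebesgue"
  obtains g where "g \<in> borel_measurable lborel" "AE z in lborel. h z = g z"
    "AE x in lborel. AE y in lborel. h (x,y) = g (x,y)"
    "AE y in lborel. AE x in lborel. h (x,y) = g (x,y)"
proof -
  have "h \<in> borel_measurable (completion lborel)"
    using assms by simp
  then obtain g where gm: "g \<in> borel_measurable lborel" and ae: "AE z in lborel. h z = g z"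
    using completion_ex_borel_measurable_real by blast
  obtain N where N: "{z \<in> space lborel. h z \<noteq> g z} \<subseteq> N" "emeasure lborel N = 0"
      "N \<in> sets lborel"
    using ae by (rule AE_E)
  have N2: "N \<in> sets (lborel \<Otimes>\<^sub>M lborel)"
    using N(3) unfolding lborel_prod .
  have "{z. z \<notin> N} = space (lborel \<Otimes>\<^sub>M lborel) - N"
    by (auto simp: space_pair_measure)
  then have NC: "{z. z \<notin> N} \<in> sets (lborel \<Otimes>\<^sub>M lborel)"
    using sets.compl_sets[OF N2] by simp
  have "AE z in (lborel \<Otimes>\<^sub>M lborel). z \<notin> N"
    using AE_not_in[of N lborel] N(2,3) unfolding lborel_prod by (simp add: null_setsI)
  then have xy: "AE x in lborel. AE y in lborel. (x,y) \<notin> N"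
    using lborel_pair.AE_pair by blast
  then have yx: "AE y in lborel. AE x in lborel. (x,y) \<notin> N"
    using lborel_pair.AE_commute[of "\<lambda>x y. (x,y) \<notin> N"] NC by (simp add: space_pair_measure)
  show ?thesis
  proof (rule that[OF gm ae])
    have out: "h (x,y) = g (x,y)" if "(x,y) \<notin> N" for x y
      using N(1) that by auto
    show "AE x in lborel. AE y in lborel. h (x,y) = g (x,y)"
      using xy by eventually_elim (auto elim: AE_mp intro: out)
    show "AE y in lborel. AE x in lborel. h (x,y) = g (x,y)"
      using yx by eventually_elim (auto elim: AE_mp intro: out)
  qed
qed

lemma lebesgue_sections_integrable:
  fixes h :: "('a::euclidean_space \<times> 'b::euclidean_space) \<Rightarrow> real"
  assumes h: "integrable lebesgue h"
  shows "AE x in lebesgue. integrable lebesgue (\<lambda>y. h (x,y))"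
    and "AE y in lebesgue. integrable lebesgue (\<lambda>x. h (x,y))"
proof -
  obtain g where gm: "g \<in> borel_measurable lborel" and ae: "AE z in lborel. h z = g z"
    and xy: "AE x in lborel. AE y in lborel. h (x,y) = g (x,y)"
    and yx: "AE y in lborel. AE x in lborel. h (x,y) = g (x,y)"
    using borel_representative_sections h by blast
  have "integrable lebesgue g"
    using h gm AE_completion[OF ae] by (auto simp: measurable_completion intro: integrable_cong_AE_imp)
  then have "integrable lborel g"
    using gm by (simp add: integrable_completion)
  then have gi2: "integrable (lborel \<Otimes>\<^sub>M lborel) (\<lambda>(x,y). g (x,y))"
    by (simp add: lborel_prod)
  have "AE x in lborel. integrable lborel (\<lambda>y. g (x,y))"
    using lborel_pair.AE_integrable_fst[of "\<lambda>x y. g (x,y)"] gi2 by simp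
  then have "AE x in lborel. integrable lebesgue (\<lambda>y. h (x,y))"
    using xy by eventually_elim (auto intro: integrable_lebesgue_if_AE_lborel)
  then show "AE x in lebesgue. integrable lebesgue (\<lambda>y. h (x,y))"
    by (simp add: AE_completion)
  have "AE y in lborel. integrable lborel (\<lambda>x. g (x,y))"
    using lborel_pair.AE_integrable_snd[of "\<lambda>x y. g (x,y)"] gi2 by simp
  then have "AE y in lborel. integrable lebesgue (\<lambda>x. h (x,y))"
    using yx by eventually_elim (auto intro: integrable_lebesgue_if_AE_lborel)
  then show "AE y in lebesgue. integrable lebesgue (\<lambda>x. h (x,y))"
    by (simp add: AE_completion)
qed

lemma integrable_bounded_mult:
  fixes e k :: "'a \<Rightarrow> real"
  assumes "e \<in> borel_measurable M" "\<And>z. \<bar>e z\<bar> \<le> B" "integrable M k"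
  shows "integrable M (\<lambda>z. e z * k z)"
proof (rule Bochner_Integration.integrable_bound[where f="\<lambda>z. B * k z"])
  show "integrable M (\<lambda>z. B * k z)" using assms(3) by auto
  show "(\<lambda>z. e z * k z) \<in> borel_measurable M" using assms(1,3) by auto
  have "\<bar>e z\<bar> * \<bar>k z\<bar> \<le> \<bar>B\<bar> * \<bar>k z\<bar>" for z
    using assms(2)[of z] by (intro mult_right_mono) auto
  then show "AE z in M. norm (e z * k z) \<le> norm (B * k z)"
    by (simp add: abs_mult)
qed

text \<open>Its sections have integral zero, so adding a multiple of it to a transport plan does not
  change the marginals; and it is dual to the second difference with steps -a, -b.\<close>

definition rect_diff :: "('a::real_vector \<times> 'b::real_vector \<Rightarrow> real) \<Rightarrow> 'a \<Rightarrow> 'b \<Rightarrow> 'a \<times> 'b \<Rightarrow> real"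
  where "rect_diff u a b z = u z - u (z + (a, 0)) - u (z + (0, b)) + u (z + (a, b))"

lemma rect_diff_sections:
  fixes u :: "('a::euclidean_space \<times> 'b::euclidean_space) \<Rightarrow> real"
  assumes ux: "\<And>x. integrable lebesgue (\<lambda>y. u (x,y))"
    and uy: "\<And>y. integrable lebesgue (\<lambda>x. u (x,y))"
  shows "(\<integral>y. rect_diff u a b (x,y) \<partial>lebesgue) = 0"
    and "(\<integral>x. rect_diff u a b (x,y) \<partial>lebesgue) = 0"
proof -
  have tr_y: "integrable lebesgue (\<lambda>y. u (x', b + y))"
    "(\<integral>y. u (x', b + y) \<partial>lebesgue) = (\<integral>y. u (x', y) \<partial>lebesgue)" for x'
    using integrable_translate[of "\<lambda>y. u (x',y)" b] integral_translate[of "\<lambda>y. u (x',y)" b] ux[of x']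
    by auto
  have tr_x: "integrable lebesgue (\<lambda>x. u (a + x, y'))"
    "(\<integral>x. u (a + x, y') \<partial>lebesgue) = (\<integral>x. u (x, y') \<partial>lebesgue)" for y'
    using integrable_translate[of "\<lambda>x. u (x,y')" a] integral_translate[of "\<lambda>x. u (x,y')" a] uy[of y']
    by auto
  have e: "rect_diff u a b (x,y) = u (x,y) - u (a + x, y) - u (x, b + y) + u (a + x, b + y)" for x y
    unfolding rect_diff_def by (simp add: add.commute)
  show "(\<integral>y. rect_diff u a b (x,y) \<partial>lebesgue) = 0"
    unfolding e using ux tr_y by auto
  show "(\<integral>x. rect_diff u a b (x,y) \<partial>lebesgue) = 0"
    unfolding e using uy tr_x by auto
qed

lemma compact_sections:
  fixes F :: "('a::euclidean_space \<times> 'b::euclidean_space) set"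
  assumes "compact F"
  shows "compact {y. (x,y) \<in> F}" "compact {x. (x,y) \<in> F}"
proof -
  have "closed {y. (x,y) \<in> F}"
    using continuous_closed_vimage[of F "\<lambda>y. (x,y)"] assms compact_imp_closed
    by (auto simp: vimage_def intro!: continuous_intros)
  moreover have "{y. (x,y) \<in> F} \<subseteq> snd ` F" by force
  moreover have "bounded (snd ` F)" using assms compact_imp_bounded bounded_snd by blast
  ultimately show "compact {y. (x,y) \<in> F}" using bounded_subset compact_eq_bounded_closed by blast
  have "closed {x. (x,y) \<in> F}"
    using continuous_closed_vimage[of F "\<lambda>x. (x,y)"] assms compact_imp_closed
    by (auto simp: vimage_def intro!: continuous_intros)
  moreover have "{x. (x,y) \<in> F} \<subseteq> fst ` F" by force
  moreover have "bounded (fst ` F)" using assms compact_imp_bounded bounded_fst by blast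
  ultimately show "compact {x. (x,y) \<in> F}" using bounded_subset compact_eq_bounded_closed by blast
qed

lemma compact_indicator_sections_integrable:
  fixes F :: "('a::euclidean_space \<times> 'b::euclidean_space) set"
  assumes "compact F"
  shows "integrable lebesgue (\<lambda>y. indicator F (x, y) :: real)"
    and "integrable lebesgue (\<lambda>x. indicator F (x, y) :: real)"
proof -
  have "(\<lambda>y. indicator F (x, y) :: real) = indicator {y. (x,y) \<in> F}"
    "(\<lambda>x. indicator F (x, y) :: real) = indicator {x. (x,y) \<in> F}"
    by (auto simp: indicator_def)
  moreover have "{y. (x,y) \<in> F} \<in> lmeasurable" "{x. (x,y) \<in> F} \<in> lmeasurable"
    using compact_sections[OF assms] lmeasurable_compact by blast+
  ultimately show "integrable lebesgue (\<lambda>y. indicator F (x, y) :: real)"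
    "integrable lebesgue (\<lambda>x. indicator F (x, y) :: real)"
    by (auto simp: fmeasurable_def)
qed

lemma integrable_shift:
  fixes u :: "'a::euclidean_space \<Rightarrow> real"
  assumes "integrable lebesgue u"
  shows "integrable lebesgue (\<lambda>z. u (z + v))"
  using integrable_translate[of u v] assms by (auto simp: add.commute)

lemma rect_diff_integrable:
  fixes u :: "('a::euclidean_space \<times> 'b::euclidean_space) \<Rightarrow> real"
  assumes "integrable lebesgue u"
  shows "integrable lebesgue (rect_diff u a b)"
  unfolding rect_diff_def using integrable_shift[OF assms] assms by auto

lemma indicator_rect_diff:
  fixes F :: "('a::euclidean_space \<times> 'b::euclidean_space) set"
  assumes "compact F"
  shows "integrable lebesgue (rect_diff (indicator F) a b)"
    and "(\<integral>y. rect_diff (indicator F) a b (x,y) \<partial>lebesgue) = 0"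
    and "(\<integral>x. rect_diff (indicator F) a b (x,y) \<partial>lebesgue) = 0"
    and "\<bar>rect_diff (indicator F) a b z\<bar> \<le> 2"
proof -
  have "F \<in> lmeasurable" using assms lmeasurable_compact by blast
  then show "integrable lebesgue (rect_diff (indicator F) a b)"
    by (intro rect_diff_integrable) (auto simp: fmeasurable_def)
  show "(\<integral>y. rect_diff (indicator F) a b (x,y) \<partial>lebesgue) = 0"
    "(\<integral>x. rect_diff (indicator F) a b (x,y) \<partial>lebesgue) = 0"
    using rect_diff_sections[OF compact_indicator_sections_integrable[OF assms]] .
  show "\<bar>rect_diff (indicator F) a b z\<bar> \<le> 2"
    unfolding rect_diff_def by (auto simp: indicator_def)
qed

lemma rect_diff_duality:
  fixes c u :: "('a::euclidean_space \<times> 'b::euclidean_space) \<Rightarrow> real"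
  assumes cm[measurable]: "c \<in> borel_measurable borel" and cb: "\<And>z. \<bar>c z\<bar> \<le> M"
    and ui: "integrable lebesgue u"
  shows "(\<integral>z. c z * rect_diff u a b z \<partial>lebesgue) = (\<integral>z. rect_diff c (-a) (-b) z * u z \<partial>lebesgue)"
proof -
  have um[measurable]: "u \<in> borel_measurable lebesgue" using ui by auto
  have cvm: "(\<lambda>z. c (z + v)) \<in> borel_measurable lebesgue" for v
  proof -
    have "(\<lambda>z. c (z + v)) \<in> borel_measurable borel" by measurable
    then show ?thesis by (simp add: measurable_completion)
  qed
  have cvb: "\<bar>c (z + v)\<bar> \<le> M" for z v using cb .
  have ci: "integrable lebesgue (\<lambda>z. c z * u (z + v))" for v
    using integrable_bounded_mult[OF _ cb integrable_shift[OF ui]] cvm[of 0] by simp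
  have cvi: "integrable lebesgue (\<lambda>z. c (z + v) * u z)" for v
    using integrable_bounded_mult[OF cvm cvb ui] .
  have shift: "(\<integral>z. c z * u (z + v) \<partial>lebesgue) = (\<integral>z. c (z + - v) * u z \<partial>lebesgue)" for v
  proof -
    have "(\<lambda>w. c (w + - v) * u w) \<in> borel_measurable lebesgue"
      by (intro borel_measurable_times cvm um)
    from integral_translate[OF this, of v] show ?thesis by (simp add: add.commute)
  qed
  have "(\<integral>z. c z * rect_diff u a b z \<partial>lebesgue) =
      (\<integral>z. c z * u (z + 0) - c z * u (z + (a,0)) - c z * u (z + (0,b)) + c z * u (z + (a,b)) \<partial>lebesgue)"
    unfolding rect_diff_def by (simp add: algebra_simps)
  also have "\<dots> = (\<integral>z. c z * u (z + 0) \<partial>lebesgue) - (\<integral>z. c z * u (z + (a,0)) \<partial>lebesgue)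
      - (\<integral>z. c z * u (z + (0,b)) \<partial>lebesgue) + (\<integral>z. c z * u (z + (a,b)) \<partial>lebesgue)"
    using ci[of 0] ci[of "(a,0)"] ci[of "(0,b)"] ci[of "(a,b)"] by simp
  also have "\<dots> = (\<integral>z. c (z + - 0) * u z \<partial>lebesgue) - (\<integral>z. c (z + - (a,0)) * u z \<partial>lebesgue)
      - (\<integral>z. c (z + - (0,b)) * u z \<partial>lebesgue) + (\<integral>z. c (z + - (a,b)) * u z \<partial>lebesgue)"
    by (simp only: shift)
  also have "\<dots> = (\<integral>z. c (z + - 0) * u z - c (z + - (a,0)) * u z
      - c (z + - (0,b)) * u z + c (z + - (a,b)) * u z \<partial>lebesgue)"
    using cvi[of "- 0"] cvi[of "- (a,0)"] cvi[of "- (0,b)"] cvi[of "- (a,b)"] by simp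
  also have "\<dots> = (\<integral>z. rect_diff c (-a) (-b) z * u z \<partial>lebesgue)"
    unfolding rect_diff_def by (simp add: algebra_simps)
  finally show ?thesis .
qed

lemma mean_value_on_segment:
  fixes F :: "'a::real_normed_vector \<Rightarrow> real"
  assumes dF: "\<And>z. z \<in> B \<Longrightarrow> (F has_derivative DF z) (at z)"
    and cvx: "convex B" and p: "p \<in> B" "p + v \<in> B"
  shows "\<exists>w\<in>B. F (p + v) - F p = DF w v"
proof -
  have seg: "p + s *\<^sub>R v \<in> B" if "s \<in> {0..1}" for s
  proof -
    have "p + s *\<^sub>R v = (1 - s) *\<^sub>R p + s *\<^sub>R (p + v)" by (simp add: algebra_simps)
    then show ?thesis using convexD[OF cvx p, of "1 - s" s] that by auto
  qed
  have "\<exists>s\<in>{0..1}. F (p + 1 *\<^sub>R v) - F (p + 0 *\<^sub>R v) = (\<lambda>t. DF (p + s *\<^sub>R v) (t *\<^sub>R v)) (1 - 0)"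
  proof (rule mvt_very_simple)
    fix s :: real assume "0 \<le> s" "s \<le> 1"
    then have "(F has_derivative DF (p + s *\<^sub>R v)) (at (p + s *\<^sub>R v))" using dF seg by auto
    moreover have "((\<lambda>s. p + s *\<^sub>R v) has_derivative (\<lambda>t. t *\<^sub>R v)) (at s within {0..1})"
      by (auto intro!: derivative_eq_intros)
    ultimately show "((\<lambda>s. F (p + s *\<^sub>R v)) has_derivative (\<lambda>t. DF (p + s *\<^sub>R v) (t *\<^sub>R v)))
        (at s within {0..1})"
      using has_derivative_compose[of "\<lambda>s. p + s *\<^sub>R v"] by blast
  qed simp
  then obtain s where "s \<in> {0..1}" "F (p + v) - F p = DF (p + s *\<^sub>R v) v"
    by auto
  then show ?thesis using seg by blast
qed

text \<open>Apply the mean value theorem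
  first in y to z \<mapsto> c z - c (z - (a,0)), then in x to the derivative in direction (0,b).\<close>

lemma rect_diff_mean_value:
  fixes c :: "('a::real_normed_vector \<times> 'b::real_normed_vector) \<Rightarrow> real"
    and D1 :: "'a \<times> 'b \<Rightarrow> (('a \<times> 'b) \<Rightarrow>\<^sub>L real)"
    and D2 :: "'a \<times> 'b \<Rightarrow> (('a \<times> 'b) \<Rightarrow>\<^sub>L (('a \<times> 'b) \<Rightarrow>\<^sub>L real))"
  assumes d1: "\<And>z. z \<in> B \<Longrightarrow> (c has_derivative blinfun_apply (D1 z)) (at z)"
    and d2: "\<And>z. z \<in> B \<Longrightarrow> (D1 has_derivative blinfun_apply (D2 z)) (at z)"
    and cvx: "convex B"
    and P: "(x,y) \<in> B" "(x - a, y) \<in> B" "(x, y - b) \<in> B" "(x - a, y - b) \<in> B"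
  shows "\<exists>w\<in>B. rect_diff c (-a) (-b) (x,y) = blinfun_apply (blinfun_apply (D2 w) (a,0)) (0,b)"
proof -
  define B' where "B' = B \<inter> (+) (a,0) ` B"
  have B': "z \<in> B'" if "z \<in> B" "z - (a,0) \<in> B" for z
    using that unfolding B'_def by (auto simp: image_iff intro!: bexI[of _ "z - (a,0)"])
  have cvx': "convex B'" unfolding B'_def using cvx by (intro convex_Int convex_translation)
  have dF: "((\<lambda>z. c z - c (z - (a,0))) has_derivative
      (\<lambda>v. blinfun_apply (D1 z) v - blinfun_apply (D1 (z - (a,0))) v)) (at z)" if "z \<in> B'" for z
  proof -
    have zB: "z \<in> B" "z - (a,0) \<in> B" using that unfolding B'_def by auto
    have "((\<lambda>z. z - (a,0)) has_derivative (\<lambda>v. v)) (at z)"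
      by (auto intro!: derivative_eq_intros)
    from has_derivative_compose[OF this d1[OF zB(2)]] show ?thesis
      by (intro has_derivative_diff d1[OF zB(1)])
  qed
  have "(x, y - b) \<in> B'" "(x, y - b) + (0, b) \<in> B'"
    using B'[of "(x, y - b)"] B'[of "(x, y)"] P by simp_all
  from mean_value_on_segment[OF dF cvx' this] obtain w where w: "w \<in> B'" and
    e1: "c ((x, y - b) + (0, b)) - c ((x, y - b) + (0, b) - (a,0)) - (c (x, y - b) - c ((x, y - b) - (a,0)))
       = blinfun_apply (D1 w) (0,b) - blinfun_apply (D1 (w - (a,0))) (0,b)"
    by blast
  have "rect_diff c (-a) (-b) (x,y) =
      c ((x, y - b) + (0, b)) - c ((x, y - b) + (0, b) - (a,0)) - (c (x, y - b) - c ((x, y - b) - (a,0)))"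
    by (simp add: rect_diff_def)
  with e1 have e1': "rect_diff c (-a) (-b) (x,y) =
      blinfun_apply (D1 w) (0,b) - blinfun_apply (D1 (w - (a,0))) (0,b)" by simp
  have wB: "w - (a,0) + (a,0) \<in> B" "w - (a,0) \<in> B" using w unfolding B'_def by auto
  have bl: "bounded_linear (\<lambda>L::('a \<times> 'b) \<Rightarrow>\<^sub>L real. blinfun_apply L (0,b))"
    by (rule bounded_bilinear.bounded_linear_left[OF bounded_bilinear_blinfun_apply])
  have "((\<lambda>z. blinfun_apply (D1 z) (0,b)) has_derivative (\<lambda>v. blinfun_apply (blinfun_apply (D2 z) v) (0,b))) (at z)"
    if "z \<in> B" for z
    using bounded_linear.has_derivative[OF bl d2[OF that]] .
  from mean_value_on_segment[OF this cvx wB(2,1)] obtain w' where "w' \<in> B" and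
    "blinfun_apply (D1 w) (0,b) - blinfun_apply (D1 (w - (a,0))) (0,b) =
       blinfun_apply (blinfun_apply (D2 w') (a,0)) (0,b)"
    by auto
  then show ?thesis using e1' by metis
qed

lemma rect_diff_sign:
  fixes c :: "'n::finite pt \<Rightarrow> real"
    and D1 :: "'n pt \<Rightarrow> ('n pt \<Rightarrow>\<^sub>L real)"
    and D2 :: "'n pt \<Rightarrow> ('n pt \<Rightarrow>\<^sub>L ('n pt \<Rightarrow>\<^sub>L real))"
  assumes d1: "\<And>z. z \<in> B \<Longrightarrow> (c has_derivative blinfun_apply (D1 z)) (at z)"
    and d2: "\<And>z. z \<in> B \<Longrightarrow> (D1 has_derivative blinfun_apply (D2 z)) (at z)"
    and cvx: "convex B"
    and sg: "\<And>w. w \<in> B \<Longrightarrow> \<sigma> * blinfun_apply (blinfun_apply (D2 w) (axis i 1, 0)) (0, axis j 1) > 0"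
    and t: "t > 0"
    and a: "a = t *\<^sub>R axis i 1" and b: "b = t *\<^sub>R axis j 1"
    and P: "z \<in> B" "z - (a, 0) \<in> B" "z - (0, b) \<in> B" "z - (a, b) \<in> B"
  shows "\<sigma> * rect_diff c (-a) (-b) z > 0"
proof -
  obtain x y where z: "z = (x,y)" by fastforce
  have "(x,y) \<in> B" "(x - a, y) \<in> B" "(x, y - b) \<in> B" "(x - a, y - b) \<in> B"
    using P by (simp_all add: z)
  then obtain w where w: "w \<in> B"
    and eq: "rect_diff c (-a) (-b) z = blinfun_apply (blinfun_apply (D2 w) (a,0)) (0,b)"
    using rect_diff_mean_value[OF d1 d2 cvx] unfolding z by blast
  have ra: "(a, 0::real^'n) = t *\<^sub>R (axis i 1, 0)" and rb: "(0::real^'n, b) = t *\<^sub>R (0, axis j 1)"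
    by (simp_all add: a b)
  have "blinfun_apply (blinfun_apply (D2 w) (a,0)) (0,b) =
      t * t * blinfun_apply (blinfun_apply (D2 w) (axis i 1, 0)) (0, axis j 1)"
    unfolding ra rb blinfun.scaleR_right blinfun.scaleR_left by simp
  then have "\<sigma> * rect_diff c (-a) (-b) z =
      t * t * (\<sigma> * blinfun_apply (blinfun_apply (D2 w) (axis i 1, 0)) (0, axis j 1))"
    using eq by (simp add: algebra_simps)
  moreover have "t * t * (\<sigma> * blinfun_apply (blinfun_apply (D2 w) (axis i 1, 0)) (0, axis j 1)) > 0"
    using sg[OF w] t by simp
  ultimately show ?thesis by linarith
qed

text \<open>We approximate A from inside by K and K from outside by an open U with a small excess; small
  translates of K remain in U, and n sets each missing only a small part of U must overlap.\<close>

lemma inner_compact_outer_open: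
  fixes A :: "'a::euclidean_space set"
  assumes A: "A \<in> sets lebesgue" "bounded A" "emeasure lebesgue A > 0" and e: "e > 0"
  obtains K U where "compact K" "K \<subseteq> A" "measure lebesgue K > 0" "open U" "K \<subseteq> U"
    "U \<in> lmeasurable" "measure lebesgue (U - K) < e * measure lebesgue K"
proof -
  have Al: "A \<in> lmeasurable" using A bounded_set_imp_lmeasurable by blast
  define mA where "mA = measure lebesgue A"
  have mA: "mA > 0"
    using A(3) Al by (simp add: mA_def emeasure_eq_measure2)
  obtain K where K: "closed K" "K \<subseteq> A" "A - K \<in> lmeasurable"
      "emeasure lebesgue (A - K) < ennreal (mA/2)"
    using sets_lebesgue_inner_closed[OF A(1), of "mA/2"] mA by auto
  have Kc: "compact K" using K(1,2) A(2) bounded_subset compact_eq_bounded_closed by blast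
  have Kl: "K \<in> lmeasurable" using Kc lmeasurable_compact by blast
  have "measure lebesgue (A - K) < mA/2"
    using K(3,4) mA by (simp add: emeasure_eq_measure2 ennreal_less_iff)
  moreover have "measure lebesgue (A - K) = mA - measure lebesgue K"
    unfolding mA_def by (rule measure_Diff) (use Al Kl K(2) in \<open>auto simp: fmeasurable_def\<close>)
  ultimately have mK: "measure lebesgue K > 0" using mA by simp
  obtain U where U: "open U" "K \<subseteq> U" "U - K \<in> lmeasurable"
      "emeasure lebesgue (U - K) < ennreal (e * measure lebesgue K)"
    using sets_lebesgue_outer_open[of K "e * measure lebesgue K"] Kl mK e by auto
  have "U = K \<union> (U - K)" using U(2) by auto
  then have "U \<in> lmeasurable" using Kl U(3) by (metis fmeasurable.Un)
  moreover have "measure lebesgue (U - K) < e * measure lebesgue K"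
    using U(3,4) mK e by (simp add: emeasure_eq_measure2 ennreal_less_iff)
  ultimately show ?thesis using that Kc K(2) mK U(1,2) by blast
qed

lemma small_translates_inside:
  fixes K U :: "'a::euclidean_space set"
  assumes "compact K" "open U" "K \<subseteq> U"
  obtains \<delta> where "\<delta> > 0" "\<And>v. norm v < \<delta> \<Longrightarrow> (+) v ` K \<subseteq> U"
proof -
  obtain \<delta> where \<delta>: "\<delta> > 0" "\<forall>x\<in>K. \<forall>y\<in>-U. \<delta> \<le> dist x y"
    using separate_compact_closed[of K "-U"] assms by auto
  have "v + k \<in> U" if "norm v < \<delta>" "k \<in> K" for v k
  proof (rule ccontr)
    assume "v + k \<notin> U"
    then have "\<delta> \<le> dist k (v + k)" using \<delta>(2) that(2) by auto
    then show False using that(1) by (simp add: dist_norm)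
  qed
  then show ?thesis using that \<delta>(1) by blast
qed

lemma measure_Inter_pos:
  assumes U: "U \<in> fmeasurable M" and I: "finite I"
    and K: "\<And>i. i \<in> I \<Longrightarrow> K i \<in> sets M" "\<And>i. i \<in> I \<Longrightarrow> K i \<subseteq> U"
    and small: "(\<Sum>i\<in>I. measure M (U - K i)) < measure M U"
  shows "measure M (U \<inter> (\<Inter>i\<in>I. K i)) > 0"
proof -
  have eq: "U \<inter> (\<Inter>i\<in>I. K i) = U - (\<Union>i\<in>I. U - K i)" by auto
  have Um: "U \<in> sets M" "emeasure M U \<noteq> \<infinity>" using U by (auto simp: fmeasurable_def)
  have Dm: "(\<Union>i\<in>I. U - K i) \<in> sets M" using I K(1) Um(1) by (intro sets.finite_UN) auto
  have "measure M (\<Union>i\<in>I. U - K i) \<le> (\<Sum>i\<in>I. measure M (U - K i))"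
    using I K(1) Um(1) by (intro measure_UNION_le) auto
  moreover have "measure M (U - (\<Union>i\<in>I. U - K i)) = measure M U - measure M (\<Union>i\<in>I. U - K i)"
    using Um Dm by (intro measure_Diff) auto
  ultimately show ?thesis unfolding eq using small by linarith
qed

lemma steinhaus_translates:
  fixes A :: "'a::euclidean_space set"
  assumes A: "A \<in> sets lebesgue" "bounded A" "emeasure lebesgue A > 0"
  obtains K \<delta> where "compact K" "K \<subseteq> A" "\<delta> > 0"
    "\<And>V. finite V \<Longrightarrow> V \<noteq> {} \<Longrightarrow> card V \<le> n \<Longrightarrow> (\<And>v. v \<in> V \<Longrightarrow> norm v < \<delta>) \<Longrightarrow>
        measure lebesgue (\<Inter>v\<in>V. (+) v ` K) > 0"
proof -
  obtain K U where K: "compact K" "K \<subseteq> A" "measure lebesgue K > 0" "open U" "K \<subseteq> U"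
      "U \<in> lmeasurable" and small: "measure lebesgue (U - K) < 1 / Suc n * measure lebesgue K"
    using inner_compact_outer_open[OF A, of "1 / Suc n"] by auto
  obtain \<delta> where \<delta>: "\<delta> > 0" "\<And>v. norm v < \<delta> \<Longrightarrow> (+) v ` K \<subseteq> U"
    using small_translates_inside[OF K(1,4,5)] by blast
  define mK where "mK = measure lebesgue K"
  have Kl: "(+) v ` K \<in> lmeasurable" for v
    using K(1) compact_translation lmeasurable_compact by blast
  have Kd: "measure lebesgue (U - (+) v ` K) = measure lebesgue (U - K)" if "norm v < \<delta>" for v
    using measure_Diff[of lebesgue U "(+) v ` K"] measure_Diff[of lebesgue U K] K(5,6) Kl[of v]
      Kl[of 0] \<delta>(2)[OF that] by (auto simp: fmeasurable_def measure_translation)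
  show ?thesis
  proof (rule that[OF K(1,2) \<delta>(1)])
    fix V :: "'a set" assume V: "finite V" "V \<noteq> {}" "card V \<le> n" and Vs: "\<And>v. v \<in> V \<Longrightarrow> norm v < \<delta>"
    have "(\<Sum>v\<in>V. measure lebesgue (U - (+) v ` K)) = real (card V) * measure lebesgue (U - K)"
      using Kd Vs by simp
    also have "\<dots> \<le> real n * measure lebesgue (U - K)"
      using V(3) by (intro mult_right_mono) auto
    also have "\<dots> < measure lebesgue K"
    proof -
      have "(1 + real n) * measure lebesgue (U - K) < measure lebesgue K"
        using small by (simp add: field_simps)
      then show ?thesis
        using measure_nonneg[of lebesgue "U - K"] distrib_right[of 1 "real n" "measure lebesgue (U - K)"]
        by linarith
    qed
    also have "\<dots> \<le> measure lebesgue U"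
      using K(5,6) Kl[of 0] by (intro measure_mono_fmeasurable) (auto simp: fmeasurable_def)
    finally have "measure lebesgue (U \<inter> (\<Inter>v\<in>V. (+) v ` K)) > 0"
      using Kl \<delta>(2) Vs by (intro measure_Inter_pos[OF K(6) V(1)]) auto
    moreover have "U \<inter> (\<Inter>v\<in>V. (+) v ` K) = (\<Inter>v\<in>V. (+) v ` K)"
      using \<delta>(2) Vs V(2) by blast
    ultimately show "measure lebesgue (\<Inter>v\<in>V. (+) v ` K) > 0" by simp
  qed
qed

lemma sign_ball_at_nondegenerate_point:
  fixes D2 :: "'n::finite pt \<Rightarrow> ('n pt \<Rightarrow>\<^sub>L ('n pt \<Rightarrow>\<^sub>L real))"
  assumes U: "open U" "continuous_on U D2" "w \<in> U"
    and nd: "det (\<chi> i j. blinfun_apply (blinfun_apply (D2 w) (axis i 1, 0)) (0, axis j 1)) \<noteq> 0"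
  obtains r i j \<sigma> where "r > 0" "ball w r \<subseteq> U"
    "\<And>v. v \<in> ball w r \<Longrightarrow> \<sigma> * blinfun_apply (blinfun_apply (D2 v) (axis i 1, 0)) (0, axis j 1) > (0::real)"
proof -
  define M where "M i j v = blinfun_apply (blinfun_apply (D2 v) (axis i 1, 0)) (0, axis j 1)" for i j v
  have "\<exists>i j. M i j w \<noteq> 0"
  proof (rule ccontr)
    assume "\<not> ?thesis"
    then have "row undefined (\<chi> i j. M i j w) = 0"
      by (simp add: row_def vec_eq_iff)
    then have "det (\<chi> i j. M i j w) = 0" by (rule det_zero_row)
    then show False using nd unfolding M_def by auto
  qed
  then obtain i j where ij: "M i j w \<noteq> 0" by blast
  have "isCont D2 w" using U continuous_on_eq_continuous_at by blast
  then have "isCont (M i j) w" unfolding M_def by (intro continuous_intros)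
  then obtain r1 where r1: "r1 > 0" "\<And>v. dist v w < r1 \<Longrightarrow> dist (M i j v) (M i j w) < \<bar>M i j w\<bar>"
    using ij unfolding continuous_at_eps_delta by (meson zero_less_abs_iff)
  obtain r2 where r2: "r2 > 0" "ball w r2 \<subseteq> U"
    using U open_contains_ball by blast
  have "sgn (M i j w) * M i j v > 0" if "v \<in> ball w (min r1 r2)" for v
  proof -
    have "\<bar>M i j v - M i j w\<bar> < \<bar>M i j w\<bar>"
      using r1(2)[of v] that by (simp add: dist_real_def dist_commute)
    then show ?thesis using ij
      by (cases "M i j w > 0") (auto simp: abs_if split: if_splits)
  qed
  moreover have "ball w (min r1 r2) \<subseteq> U" using r2 by auto
  ultimately show ?thesis
    using that[where r="min r1 r2" and i=i and j=j and \<sigma>="sgn (M i j w)"] r1(1) r2(1) unfolding M_def by auto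
qed

text \<open>A set of positive measure meets some member of an open cover of the complement of a
  negligible set in positive measure (by Lindelof, a countable subcover suffices).\<close>

lemma positive_measure_in_cover:
  fixes S Z :: "'a::euclidean_space set"
  assumes S: "S \<in> sets lebesgue" "emeasure lebesgue S > 0" and Z: "negligible Z"
    and opn: "\<And>B. B \<in> \<F> \<Longrightarrow> open B" and cover: "\<And>w. w \<notin> Z \<Longrightarrow> \<exists>B\<in>\<F>. w \<in> B"
  obtains B where "B \<in> \<F>" "emeasure lebesgue (S \<inter> B) > 0"
proof -
  obtain \<F>' where F': "\<F>' \<subseteq> \<F>" "countable \<F>'" "\<Union>\<F>' = \<Union>\<F>"
    using Lindelof[of \<F>, OF opn] by blast
  have "\<exists>B\<in>\<F>'. emeasure lebesgue (S \<inter> B) > 0"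
  proof (rule ccontr)
    assume "\<not> ?thesis"
    then have "S \<inter> B \<in> null_sets lebesgue" if "B \<in> \<F>'" for B
      using that F'(1) opn S(1) by (auto simp: null_sets_def intro!: sets.Int borel_open)
    then have "(\<Union>B\<in>\<F>'. S \<inter> B) \<in> null_sets lebesgue"
      by (rule null_sets_UN'[OF F'(2)])
    moreover have "S \<inter> Z \<in> null_sets lebesgue"
      using negligible_subset[OF Z] by (simp add: negligible_iff_null_sets[symmetric])
    ultimately have N: "(\<Union>B\<in>\<F>'. S \<inter> B) \<union> (S \<inter> Z) \<in> null_sets lebesgue"
      by (rule null_sets.Un)
    have "S \<subseteq> (\<Union>B\<in>\<F>'. S \<inter> B) \<union> (S \<inter> Z)"
    proof
      fix s assume s: "s \<in> S"
      show "s \<in> (\<Union>B\<in>\<F>'. S \<inter> B) \<union> (S \<inter> Z)"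
      proof (cases "s \<in> Z")
        case False
        then have "s \<in> \<Union>\<F>'" using cover F'(3) by blast
        then show ?thesis using s by blast
      qed (use s in blast)
    qed
    then have "S \<in> null_sets lebesgue"
      using null_sets_subset[OF N S(1)] by blast
    then show False using S(2) by auto
  qed
  then show ?thesis using that F'(1) by blast
qed

lemma good_ball:
  fixes c :: "'n::finite pt \<Rightarrow> real"
  assumes ca: "cost_assumptions c"
    and S: "S \<in> sets lebesgue" "emeasure lebesgue S > 0"
  obtains B i j \<sigma> D1 D2 where "open B" "convex B" "bounded B" "emeasure lebesgue (S \<inter> B) > 0"
    "\<And>z. z \<in> B \<Longrightarrow> (c has_derivative blinfun_apply (D1 z)) (at z)"
    "\<And>z. z \<in> B \<Longrightarrow> ((D1 :: 'n pt \<Rightarrow> ('n pt \<Rightarrow>\<^sub>L real)) has_derivative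
                  blinfun_apply ((D2 :: 'n pt \<Rightarrow> ('n pt \<Rightarrow>\<^sub>L ('n pt \<Rightarrow>\<^sub>L real))) z)) (at z)"
    "\<And>w. w \<in> B \<Longrightarrow> \<sigma> * blinfun_apply (blinfun_apply (D2 w) (axis i 1, 0)) (0, axis j 1) > (0::real)"
proof -
  obtain Z where Z: "closed Z" "negligible Z" "C2_nondeg_on (- Z) c"
    using ca unfolding cost_assumptions_def by blast
  obtain D1 :: "'n pt \<Rightarrow> ('n pt \<Rightarrow>\<^sub>L real)" and D2 :: "'n pt \<Rightarrow> ('n pt \<Rightarrow>\<^sub>L ('n pt \<Rightarrow>\<^sub>L real))"
    where d1: "\<forall>z\<in>-Z. (c has_derivative blinfun_apply (D1 z)) (at z)"
      and d2: "\<forall>z\<in>-Z. (D1 has_derivative blinfun_apply (D2 z)) (at z)"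
      and d2c: "continuous_on (-Z) D2"
      and nd: "\<forall>z\<in>-Z. det (\<chi> i j. blinfun_apply (blinfun_apply (D2 z) (axis i 1, 0)) (0, axis j 1)) \<noteq> 0"
    using Z(3) unfolding C2_nondeg_on_def by blast
  define \<F> where "\<F> = {ball w r | w r. ball w r \<subseteq> -Z \<and> (\<exists>i j \<sigma>. \<forall>v\<in>ball w r.
      \<sigma> * blinfun_apply (blinfun_apply (D2 v) (axis i 1, 0)) (0, axis j 1) > (0::real))}"
  have "\<exists>B\<in>\<F>. w \<in> B" if w: "w \<notin> Z" for w
  proof -
    obtain r i j \<sigma> where r: "r > 0" "ball w r \<subseteq> -Z"
      "\<And>v. v \<in> ball w r \<Longrightarrow> \<sigma> * blinfun_apply (blinfun_apply (D2 v) (axis i 1, 0)) (0, axis j 1) > (0::real)"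
      by (rule sign_ball_at_nondegenerate_point[of "-Z" D2 w]) (use Z(1) d2c nd w in auto)
    then have "ball w r \<in> \<F>" unfolding \<F>_def by blast
    moreover have "w \<in> ball w r" using r(1) by simp
    ultimately show ?thesis by blast
  qed
  moreover have "\<And>B. B \<in> \<F> \<Longrightarrow> open B" unfolding \<F>_def by auto
  ultimately obtain B where B: "B \<in> \<F>" "emeasure lebesgue (S \<inter> B) > 0"
    using positive_measure_in_cover[OF S Z(2)] by blast
  then obtain w r i j \<sigma> where Bd: "B = ball w r" "B \<subseteq> -Z"
    "\<And>v. v \<in> B \<Longrightarrow> \<sigma> * blinfun_apply (blinfun_apply (D2 v) (axis i 1, 0)) (0, axis j 1) > (0::real)"
    unfolding \<F>_def by blast
  show ?thesis
  proof (rule that[of B D1 D2 \<sigma> i j])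
    show "open B" "convex B" "bounded B" using Bd(1) by auto
  qed (use B(2) Bd(2,3) d1 d2 in auto)
qed

lemma cost_bounded_borel:
  fixes c :: "'n::finite pt \<Rightarrow> real"
  assumes "continuous_on UNIV c" "cost_assumptions c"
  obtains M where "c \<in> borel_measurable borel" "\<And>z. \<bar>c z\<bar> \<le> M"
  using assms borel_measurable_continuous_onI unfolding cost_assumptions_def bounded_real
  by (metis rangeI)

lemma integral_indicator_pos:
  fixes f :: "'a \<Rightarrow> real"
  assumes F: "F \<in> sets M" "emeasure M F > 0"
    and fi: "integrable M (\<lambda>z. indicator F z * f z)" and pos: "\<And>z. z \<in> F \<Longrightarrow> 0 < f z"
  shows "0 < (\<integral>z. indicator F z * f z \<partial>M)"
proof -
  have nn: "\<And>z. 0 \<le> indicator F z * f z"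
    using pos by (auto simp: indicator_def less_imp_le)
  have "(\<integral>z. indicator F z * f z \<partial>M) \<noteq> 0"
  proof
    assume "(\<integral>z. indicator F z * f z \<partial>M) = 0"
    then have "AE z in M. indicator F z * f z = 0"
      using integral_nonneg_eq_0_iff_AE[OF fi] nn by auto
    then have "AE z in M. z \<notin> F"
      by eventually_elim (use pos in \<open>fastforce simp: indicator_def\<close>)
    then have "F \<in> null_sets M"
      using F(1) by (simp add: AE_iff_null_sets)
    then show False using F(2) by (simp add: null_sets_def)
  qed
  moreover have "0 \<le> (\<integral>z. indicator F z * f z \<partial>M)"
    using nn by simp
  ultimately show ?thesis by linarith
qed

text \<open>If the (i,j) entry of the mixed Hessian has sign \<sigma> on B and all four corners of the
  rectangles over a compact F of positive measure lie in B, then pairing c with the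
  rectangular difference of the indicator of F has sign \<sigma>: by duality it is the integral
  over F of the second difference of c.\<close>

lemma rect_diff_pairing_sign:
  fixes c :: "'n::finite pt \<Rightarrow> real"
    and D1 :: "'n pt \<Rightarrow> ('n pt \<Rightarrow>\<^sub>L real)"
    and D2 :: "'n pt \<Rightarrow> ('n pt \<Rightarrow>\<^sub>L ('n pt \<Rightarrow>\<^sub>L real))"
  assumes cm[measurable]: "c \<in> borel_measurable borel" and Mc: "\<And>z. \<bar>c z\<bar> \<le> M"
    and d1: "\<And>z. z \<in> B \<Longrightarrow> (c has_derivative blinfun_apply (D1 z)) (at z)"
    and d2: "\<And>z. z \<in> B \<Longrightarrow> (D1 has_derivative blinfun_apply (D2 z)) (at z)"
    and cvx: "convex B"
    and sg: "\<And>w. w \<in> B \<Longrightarrow> \<sigma> * blinfun_apply (blinfun_apply (D2 w) (axis i 1, 0)) (0, axis j 1) > 0"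
    and t: "t > 0" and a: "a = t *\<^sub>R axis i 1" and b: "b = t *\<^sub>R axis j 1"
    and F: "compact F" "measure lebesgue F > 0"
    and corners: "\<And>z. z \<in> F \<Longrightarrow> z \<in> B \<and> z - (a, 0) \<in> B \<and> z - (0, b) \<in> B \<and> z - (a, b) \<in> B"
  shows "0 < \<sigma> * (\<integral>z. c z * rect_diff (indicator F) a b z \<partial>lebesgue)"
proof -
  have Fm: "F \<in> lmeasurable" using F(1) lmeasurable_compact by blast
  then have Fi: "integrable lebesgue (indicator F :: 'n pt \<Rightarrow> real)"
    by (auto simp: fmeasurable_def)
  have pos: "0 < \<sigma> * rect_diff c (-a) (-b) z" if "z \<in> F" for z
    using rect_diff_sign[OF d1 d2 cvx sg t a b] corners[OF that] by blast
  have m: "(\<lambda>z. \<sigma> * rect_diff c (-a) (-b) z) \<in> borel_measurable lebesgue"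
    unfolding rect_diff_def by (simp add: measurable_completion)
  have bd: "\<bar>\<sigma> * rect_diff c (-a) (-b) z\<bar> \<le> \<bar>\<sigma>\<bar> * (4 * M)" for z
    unfolding rect_diff_def abs_mult
    using Mc[of z] Mc[of "z + (-a,0)"] Mc[of "z + (0,-b)"] Mc[of "z + (-a,-b)"]
    by (intro mult_left_mono) auto
  have "integrable lebesgue (\<lambda>z. indicator F z * (\<sigma> * rect_diff c (-a) (-b) z))"
    using integrable_bounded_mult[OF m bd Fi] by (simp add: mult.commute)
  then have "0 < (\<integral>z. indicator F z * (\<sigma> * rect_diff c (-a) (-b) z) \<partial>lebesgue)"
    using integral_indicator_pos[where M=lebesgue and F=F, OF _ _ _ pos] F(2) Fm
    by (simp add: emeasure_eq_measure2)
  also have "\<dots> = \<sigma> * (\<integral>z. c z * rect_diff (indicator F) a b z \<partial>lebesgue)"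
    using rect_diff_duality[OF cm Mc Fi, of a b] by (simp add: ac_simps)
  finally show ?thesis .
qed

text \<open>The rectangle's sides are small
  multiples of basis vectors chosen by the sign of the mixed Hessian on a ball meeting S, and
  F is the intersection of K with three of its translates, which has positive measure by the
  Steinhaus lemma.\<close>

lemma cost_detects_rectangle:
  fixes c :: "'n::finite pt \<Rightarrow> real"
  assumes cc: "continuous_on UNIV c" and ca: "cost_assumptions c"
    and S: "S \<in> sets lebesgue" "emeasure lebesgue S > 0"
  obtains K F a b where "compact K" "K \<subseteq> S" "compact F"
    "\<And>z. rect_diff (indicator F) a b z \<noteq> 0 \<Longrightarrow> z \<in> K"
    "(\<integral>z. c z * rect_diff (indicator F) a b z \<partial>lebesgue) \<noteq> 0"
proof -
  obtain B i j \<sigma> D1 D2 where B: "open B" "convex B" "bounded B" "emeasure lebesgue (S \<inter> B) > 0"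
    and d1: "\<And>z. z \<in> B \<Longrightarrow> (c has_derivative blinfun_apply (D1 z)) (at z)"
    and d2: "\<And>z. z \<in> B \<Longrightarrow> ((D1 :: 'n pt \<Rightarrow> ('n pt \<Rightarrow>\<^sub>L real)) has_derivative
                  blinfun_apply ((D2 :: 'n pt \<Rightarrow> ('n pt \<Rightarrow>\<^sub>L ('n pt \<Rightarrow>\<^sub>L real))) z)) (at z)"
    and sg: "\<And>w. w \<in> B \<Longrightarrow> \<sigma> * blinfun_apply (blinfun_apply (D2 w) (axis i 1, 0)) (0, axis j 1) > 0"
    by (rule good_ball[OF ca S]) blast
  have SB: "S \<inter> B \<in> sets lebesgue" "bounded (S \<inter> B)" using S(1) B(1,3) by auto
  obtain K \<delta> where K: "compact K" "K \<subseteq> S \<inter> B" "\<delta> > 0"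
    and Kpos: "\<And>V. finite V \<Longrightarrow> V \<noteq> {} \<Longrightarrow> card V \<le> 4 \<Longrightarrow> (\<And>v. v \<in> V \<Longrightarrow> norm v < \<delta>) \<Longrightarrow>
        measure lebesgue (\<Inter>v\<in>V. (+) v ` K) > 0"
    by (rule steinhaus_translates[OF SB B(4)]) blast
  define t where "t = \<delta> / 3"
  have t: "t > 0" using K(3) by (simp add: t_def)
  define a :: "real^'n" where "a = t *\<^sub>R axis i 1"
  define b :: "real^'n" where "b = t *\<^sub>R axis j 1"
  define V :: "'n pt set" where "V = {0, (a,0), (0,b), (a,b)}"
  define F where "F = (\<Inter>v\<in>V. (+) v ` K)"
  have "norm v < \<delta>" if "v \<in> V" for v
  proof -
    have "norm a = t" "norm b = t" using t by (auto simp: a_def b_def)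
    moreover have "norm (a,b) \<le> norm a + norm b" by (rule norm_Pair_le)
    ultimately have "norm v \<le> 2 * t" using that t by (auto simp: V_def)
    moreover have "2 * t < \<delta>" using K(3) by (simp add: t_def)
    ultimately show ?thesis by linarith
  qed
  moreover have "card V \<le> 4" unfolding V_def by (simp add: card_insert_if)
  ultimately have Fpos: "measure lebesgue F > 0"
    unfolding F_def by (intro Kpos) (auto simp: V_def)
  have FK: "F = K \<inter> (+) (a,0) ` K \<inter> (+) (0,b) ` K \<inter> (+) (a,b) ` K"
    by (auto simp: F_def V_def)
  have Fc: "compact F" unfolding FK using K(1) by (intro compact_Int compact_translation) auto
  have support: "z \<in> K" if "rect_diff (indicator F) a b z \<noteq> 0" for z
  proof -
    have "z \<in> F \<or> z + (a,0) \<in> F \<or> z + (0,b) \<in> F \<or> z + (a,b) \<in> F"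
      using that unfolding rect_diff_def by (auto simp: indicator_def split: if_splits)
    then show ?thesis unfolding FK by (auto simp: image_iff)
  qed
  have corners: "z \<in> B \<and> z - (a,0) \<in> B \<and> z - (0,b) \<in> B \<and> z - (a,b) \<in> B" if "z \<in> F" for z
  proof -
    have "z \<in> K" "z - (a,0) \<in> K" "z - (0,b) \<in> K" "z - (a,b) \<in> K"
      using that unfolding FK by auto
    then show ?thesis using K(2) by auto
  qed
  obtain M where c: "c \<in> borel_measurable borel" "\<And>z. \<bar>c z\<bar> \<le> M"
    by (rule cost_bounded_borel[OF cc ca]) blast
  have "0 < \<sigma> * (\<integral>z. c z * rect_diff (indicator F) a b z \<partial>lebesgue)"
    by (rule rect_diff_pairing_sign[OF c d1 d2 B(2) sg t a_def b_def Fc Fpos corners])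
  then have "(\<integral>z. c z * rect_diff (indicator F) a b z \<partial>lebesgue) \<noteq> 0" by auto
  with that[OF K(1) _ Fc support] K(2) show ?thesis by blast
qed

lemma I_c_lincomb:
  fixes c h k :: "'n::finite pt \<Rightarrow> real"
  assumes c: "c \<in> borel_measurable borel" "\<And>z. \<bar>c z\<bar> \<le> M"
    and hk: "integrable lebesgue h" "integrable lebesgue k"
  shows "I_c c (\<lambda>z. \<alpha> * h z + \<beta> * k z) = \<alpha> * I_c c h + \<beta> * I_c c k"
proof -
  have cm: "c \<in> borel_measurable lebesgue" using c(1) by (simp add: measurable_completion)
  have "integrable lebesgue (\<lambda>z. c z * h z)" "integrable lebesgue (\<lambda>z. c z * k z)"
    using integrable_bounded_mult[OF cm c(2)] hk by auto
  then show ?thesis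
    unfolding I_c_def by (simp add: algebra_simps)
qed

lemma L1c_lincomb:
  fixes h k :: "'a::euclidean_space \<Rightarrow> real"
  assumes "L1c h" "L1c k"
  shows "L1c (\<lambda>z. \<alpha> * h z + \<beta> * k z)"
proof -
  obtain K1 K2 where K: "compact K1" "AE z in lebesgue. z \<notin> K1 \<longrightarrow> h z = 0"
    "compact K2" "AE z in lebesgue. z \<notin> K2 \<longrightarrow> k z = 0"
    using assms unfolding L1c_def by blast
  have "AE z in lebesgue. z \<notin> K1 \<union> K2 \<longrightarrow> \<alpha> * h z + \<beta> * k z = 0"
    using K(2,4) by eventually_elim auto
  then show ?thesis
    using assms K(1,3) unfolding L1c_def by (intro conjI exI[of _ "K1 \<union> K2"]) auto
qed

lemma section_integrals_lincomb:
  fixes h k :: "('a::euclidean_space \<times> 'b::euclidean_space) \<Rightarrow> real"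
  assumes "integrable lebesgue h" "integrable lebesgue k"
  shows "AE x in lebesgue. (\<integral>y. \<alpha> * h (x,y) + \<beta> * k (x,y) \<partial>lebesgue) =
      \<alpha> * (\<integral>y. h (x,y) \<partial>lebesgue) + \<beta> * (\<integral>y. k (x,y) \<partial>lebesgue)"
    and "AE y in lebesgue. (\<integral>x. \<alpha> * h (x,y) + \<beta> * k (x,y) \<partial>lebesgue) =
      \<alpha> * (\<integral>x. h (x,y) \<partial>lebesgue) + \<beta> * (\<integral>x. k (x,y) \<partial>lebesgue)"
  using lebesgue_sections_integrable(1)[OF assms(1)] lebesgue_sections_integrable(1)[OF assms(2)]
    lebesgue_sections_integrable(2)[OF assms(1)] lebesgue_sections_integrable(2)[OF assms(2)]
  by (auto elim!: eventually_elim2)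

lemma Gamma_bar_midpoint:
  assumes "h1 \<in> Gamma_bar f g hb" "h2 \<in> Gamma_bar f g hb"
  shows "(\<lambda>z. (h1 z + h2 z) / 2) \<in> Gamma_bar f g hb"
proof -
  have L: "L1c h1" "L1c h2" and pos: "AE z in lebesgue. 0 \<le> h1 z" "AE z in lebesgue. 0 \<le> h2 z"
    and mf: "AE x in lebesgue. (\<integral>y. h1 (x, y) \<partial>lebesgue) = f x"
      "AE x in lebesgue. (\<integral>y. h2 (x, y) \<partial>lebesgue) = f x"
    and mg: "AE y in lebesgue. (\<integral>x. h1 (x, y) \<partial>lebesgue) = g y"
      "AE y in lebesgue. (\<integral>x. h2 (x, y) \<partial>lebesgue) = g y"
    and cap: "AE z in lebesgue. h1 z \<le> hb z" "AE z in lebesgue. h2 z \<le> hb z"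
    using assms unfolding Gamma_bar_def Gamma_def by auto
  have mid: "(\<lambda>z. (h1 z + h2 z) / 2) = (\<lambda>z. 1/2 * h1 z + 1/2 * h2 z)" by auto
  have i: "integrable lebesgue h1" "integrable lebesgue h2" using L unfolding L1c_def by auto
  show ?thesis
    unfolding Gamma_bar_def Gamma_def mem_Collect_eq mid
  proof (intro conjI)
    show "L1c (\<lambda>z. 1/2 * h1 z + 1/2 * h2 z)" using L1c_lincomb[OF L] .
    show "AE z in lebesgue. 0 \<le> 1/2 * h1 z + 1/2 * h2 z" using pos by eventually_elim auto
    show "AE z in lebesgue. 1/2 * h1 z + 1/2 * h2 z \<le> hb z" using cap by eventually_elim auto
    show "AE x in lebesgue. (\<integral>y. 1/2 * h1 (x,y) + 1/2 * h2 (x,y) \<partial>lebesgue) = f x"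
      using section_integrals_lincomb(1)[OF i, of "1/2" "1/2"] mf by eventually_elim auto
    show "AE y in lebesgue. (\<integral>x. 1/2 * h1 (x,y) + 1/2 * h2 (x,y) \<partial>lebesgue) = g y"
      using section_integrals_lincomb(2)[OF i, of "1/2" "1/2"] mg by eventually_elim auto
  qed
qed

lemma Gamma_bar_perturb:
  assumes h: "h \<in> Gamma_bar f g hb"
    and \<phi>: "integrable lebesgue \<phi>" "compact K" "\<And>z. \<phi> z \<noteq> 0 \<Longrightarrow> z \<in> K"
    and \<phi>f: "AE x in lebesgue. (\<integral>y. \<phi> (x,y) \<partial>lebesgue) = 0"
    and \<phi>g: "AE y in lebesgue. (\<integral>x. \<phi> (x,y) \<partial>lebesgue) = 0"
    and bd: "\<And>z. \<bar>\<phi> z\<bar> \<le> \<epsilon>" and room: "\<And>z. \<phi> z \<noteq> 0 \<Longrightarrow> \<epsilon> \<le> h z \<and> h z + \<epsilon> \<le> hb z"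
  shows "(\<lambda>z. h z + \<phi> z) \<in> Gamma_bar f g hb"
proof -
  have L: "L1c h" and pos: "AE z in lebesgue. 0 \<le> h z"
    and mf: "AE x in lebesgue. (\<integral>y. h (x, y) \<partial>lebesgue) = f x"
    and mg: "AE y in lebesgue. (\<integral>x. h (x, y) \<partial>lebesgue) = g y"
    and cap: "AE z in lebesgue. h z \<le> hb z"
    using h unfolding Gamma_bar_def Gamma_def by auto
  have "AE z in lebesgue. z \<notin> K \<longrightarrow> \<phi> z = 0" using \<phi>(3) by (intro AE_I2) blast
  then have L\<phi>: "L1c \<phi>" using \<phi>(1,2) unfolding L1c_def by blast
  have i: "integrable lebesgue h" using L unfolding L1c_def by auto
  have stays: "0 \<le> h z + \<phi> z \<and> h z + \<phi> z \<le> hb z" if "0 \<le> h z" "h z \<le> hb z" for z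
    using that room[of z] bd[of z] by (cases "\<phi> z = 0") (auto simp: abs_le_iff)
  show ?thesis
    unfolding Gamma_bar_def Gamma_def mem_Collect_eq
  proof (intro conjI)
    show "L1c (\<lambda>z. h z + \<phi> z)" using L1c_lincomb[OF L L\<phi>, of 1 1] by simp
    show "AE z in lebesgue. 0 \<le> h z + \<phi> z" "AE z in lebesgue. h z + \<phi> z \<le> hb z"
      using pos cap by (eventually_elim, use stays in blast)+
    show "AE x in lebesgue. (\<integral>y. h (x,y) + \<phi> (x,y) \<partial>lebesgue) = f x"
      using section_integrals_lincomb(1)[OF i \<phi>(1), of 1 1] mf \<phi>f by eventually_elim auto
    show "AE y in lebesgue. (\<integral>x. h (x,y) + \<phi> (x,y) \<partial>lebesgue) = g y"
      using section_integrals_lincomb(2)[OF i \<phi>(1), of 1 1] mg \<phi>g by eventually_elim auto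
  qed
qed

text \<open>A minimizer leaves no room on a set of positive measure: otherwise the perturbation by
  a suitably signed multiple of the rectangular difference found above stays admissible and
  strictly decreases the cost.\<close>

lemma minimizer_no_room:
  fixes c :: "'n::finite pt \<Rightarrow> real" and hb h :: "'n pt \<Rightarrow> real" and f g :: "real^'n \<Rightarrow> real"
  assumes cc: "continuous_on UNIV c" and ca: "cost_assumptions c"
    and hbm[measurable]: "hb \<in> borel_measurable lebesgue"
    and mini: "is_minimizer c (Gamma_bar f g hb) h"
    and \<epsilon>: "\<epsilon> > 0"
  shows "{z. \<epsilon> \<le> h z \<and> h z + \<epsilon> \<le> hb z} \<in> null_sets lebesgue"
proof (rule ccontr)
  define S where "S = {z. \<epsilon> \<le> h z \<and> h z + \<epsilon> \<le> hb z}"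
  assume "{z. \<epsilon> \<le> h z \<and> h z + \<epsilon> \<le> hb z} \<notin> null_sets lebesgue"
  then have notnull: "S \<notin> null_sets lebesgue" unfolding S_def .
  have hG: "h \<in> Gamma_bar f g hb" and hmin: "\<And>h'. h' \<in> Gamma_bar f g hb \<Longrightarrow> I_c c h \<le> I_c c h'"
    using mini unfolding is_minimizer_def by auto
  have hi: "integrable lebesgue h"
    using hG unfolding Gamma_bar_def Gamma_def L1c_def by auto
  then have [measurable]: "h \<in> borel_measurable lebesgue" by auto
  have "{z \<in> space lebesgue. \<epsilon> \<le> h z \<and> h z + \<epsilon> \<le> hb z} \<in> sets lebesgue" by measurable
  then have Ss: "S \<in> sets lebesgue" unfolding S_def by simp
  then have Spos: "emeasure lebesgue S > 0"
    using notnull by (auto simp: null_sets_def zero_less_iff_neq_zero)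
  obtain K F a b where K: "compact K" "K \<subseteq> S" and Fc: "compact F"
    and support: "\<And>z. rect_diff (indicator F) a b z \<noteq> 0 \<Longrightarrow> z \<in> K"
    and pairing: "(\<integral>z. c z * rect_diff (indicator F) a b z \<partial>lebesgue) \<noteq> 0"
    by (rule cost_detects_rectangle[OF cc ca Ss Spos]) blast
  define \<phi> where "\<phi> = rect_diff (indicator F :: 'n pt \<Rightarrow> real) a b"
  define J where "J = (\<integral>z. c z * \<phi> z \<partial>lebesgue)"
  define d where "d = - sgn J * \<epsilon> / 2"
  have \<phi>i: "integrable lebesgue \<phi>" and secs: "\<And>x y. (\<integral>y. \<phi> (x,y) \<partial>lebesgue) = 0"
      "\<And>x y. (\<integral>x. \<phi> (x,y) \<partial>lebesgue) = 0"
    unfolding \<phi>_def using indicator_rect_diff(1-3)[OF Fc] by auto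
  have "\<bar>d * \<phi> z\<bar> \<le> \<epsilon> / 2 * 2" for z
    unfolding abs_mult d_def \<phi>_def using \<epsilon> indicator_rect_diff(4)[OF Fc]
    by (intro mult_mono) (auto simp: abs_mult abs_sgn_eq)
  then have bd: "\<bar>d * \<phi> z\<bar> \<le> \<epsilon>" for z by simp
  have "(\<lambda>z. h z + d * \<phi> z) \<in> Gamma_bar f g hb"
  proof (rule Gamma_bar_perturb[OF hG _ K(1)])
    show "integrable lebesgue (\<lambda>z. d * \<phi> z)" using \<phi>i by auto
    show "\<And>z. d * \<phi> z \<noteq> 0 \<Longrightarrow> z \<in> K" using support unfolding \<phi>_def by auto
    show "\<And>z. d * \<phi> z \<noteq> 0 \<Longrightarrow> \<epsilon> \<le> h z \<and> h z + \<epsilon> \<le> hb z"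
      using support K(2) unfolding \<phi>_def S_def by auto
  qed (use secs bd in auto)
  then have "I_c c h \<le> I_c c (\<lambda>z. 1 * h z + d * \<phi> z)" using hmin by simp
  also obtain M where cM: "c \<in> borel_measurable borel" "\<And>z. \<bar>c z\<bar> \<le> M"
    by (rule cost_bounded_borel[OF cc ca]) blast
  then have "I_c c (\<lambda>z. 1 * h z + d * \<phi> z) = I_c c h + d * J"
    using I_c_lincomb[OF cM hi \<phi>i, of 1 d] unfolding J_def by (simp add: I_c_def)
  finally have "0 \<le> d * J" by simp
  moreover have "d * J = - (\<epsilon> / 2) * \<bar>J\<bar>"
    unfolding d_def by (simp add: abs_sgn mult.commute)
  moreover have "J \<noteq> 0" using pairing unfolding J_def \<phi>_def .
  ultimately show False using \<epsilon> by (simp add: mult_le_0_iff)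
qed

lemma minimizer_bang_bang:
  fixes c :: "'n::finite pt \<Rightarrow> real" and hb h :: "'n pt \<Rightarrow> real" and f g :: "real^'n \<Rightarrow> real"
  assumes cc: "continuous_on UNIV c" and ca: "cost_assumptions c"
    and hbm: "hb \<in> borel_measurable lebesgue"
    and mini: "is_minimizer c (Gamma_bar f g hb) h"
  shows "AE z in lebesgue. h z \<le> 0 \<or> hb z \<le> h z"
proof -
  have "AE z in lebesgue. z \<notin> {z. 1 / Suc n \<le> h z \<and> h z + 1 / Suc n \<le> hb z}" for n :: nat
    by (rule AE_not_in[OF minimizer_no_room[OF cc ca hbm mini]]) simp
  then have "AE z in lebesgue. \<forall>n::nat. \<not> (1 / Suc n \<le> h z \<and> h z + 1 / Suc n \<le> hb z)"
    by (simp add: AE_all_countable)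
  then show ?thesis
  proof eventually_elim
    case (elim z)
    show ?case
    proof (rule ccontr)
      assume "\<not> (h z \<le> 0 \<or> hb z \<le> h z)"
      then have "0 < min (h z) (hb z - h z)" by simp
      then obtain n where "inverse (real (Suc n)) < min (h z) (hb z - h z)"
        using reals_Archimedean by blast
      then show False using elim[rule_format, of n] by (simp add: inverse_eq_divide)
    qed
  qed
qed

lemma midpoint_minimizer:
  fixes c :: "'n::finite pt \<Rightarrow> real"
  assumes c: "c \<in> borel_measurable borel" "\<And>z. \<bar>c z\<bar> \<le> M"
    and m1: "is_minimizer c (Gamma_bar f g hb) h1" and m2: "is_minimizer c (Gamma_bar f g hb) h2"
  shows "is_minimizer c (Gamma_bar f g hb) (\<lambda>z. (h1 z + h2 z) / 2)"
proof -
  have G: "h1 \<in> Gamma_bar f g hb" "h2 \<in> Gamma_bar f g hb"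
    and min1: "\<And>h'. h' \<in> Gamma_bar f g hb \<Longrightarrow> I_c c h1 \<le> I_c c h'"
    and min2: "\<And>h'. h' \<in> Gamma_bar f g hb \<Longrightarrow> I_c c h2 \<le> I_c c h'"
    using m1 m2 unfolding is_minimizer_def by auto
  have i: "integrable lebesgue h1" "integrable lebesgue h2"
    using G unfolding Gamma_bar_def Gamma_def L1c_def by auto
  have "I_c c (\<lambda>z. (h1 z + h2 z) / 2) = I_c c (\<lambda>z. 1/2 * h1 z + 1/2 * h2 z)"
    by (simp add: add_divide_distrib)
  also have "\<dots> = 1/2 * I_c c h1 + 1/2 * I_c c h2"
    by (rule I_c_lincomb[OF c i])
  also have "\<dots> = I_c c h1"
    using min1[OF G(2)] min2[OF G(1)] by simp
  finally show ?thesis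
    using Gamma_bar_midpoint[OF G] min1 unfolding is_minimizer_def by simp
qed

theorem theorem8p1:
  fixes c :: "'n::finite pt \<Rightarrow> real"
    and hb :: "'n pt \<Rightarrow> real"
    and f g :: "real^'n \<Rightarrow> real"
  assumes "continuous_on UNIV c"
    and "cost_assumptions c"
    and "hb \<in> borel_measurable lebesgue"
    and "AE z in lebesgue. 0 \<le> hb z"
    and "\<exists>M. AE z in lebesgue. \<bar>hb z\<bar> \<le> M"
    and "\<exists>K. compact K \<and> (AE z in lebesgue. z \<notin> K \<longrightarrow> hb z = 0)"
    and "L1c f" and "AE x in lebesgue. 0 \<le> f x"
    and "L1c g" and "AE y in lebesgue. 0 \<le> g y"
    and "Gamma_bar f g hb \<noteq> {}"
    and "is_minimizer c (Gamma_bar f g hb) h1"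
    and "is_minimizer c (Gamma_bar f g hb) h2"
  shows "AE z in lebesgue. h1 z = h2 z"
proof -
  obtain M where c: "c \<in> borel_measurable borel" "\<And>z. \<bar>c z\<bar> \<le> M"
    by (rule cost_bounded_borel[OF assms(1,2)]) blast
  have "is_minimizer c (Gamma_bar f g hb) (\<lambda>z. (h1 z + h2 z) / 2)"
    by (rule midpoint_minimizer[OF c assms(12,13)])
  then have "AE z in lebesgue. (h1 z + h2 z) / 2 \<le> 0 \<or> hb z \<le> (h1 z + h2 z) / 2"
    by (rule minimizer_bang_bang[OF assms(1-3)])
  moreover have "AE z in lebesgue. 0 \<le> h1 z \<and> h1 z \<le> hb z" "AE z in lebesgue. 0 \<le> h2 z \<and> h2 z \<le> hb z"
    using assms(12,13) unfolding is_minimizer_def Gamma_bar_def Gamma_def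
    by (auto elim!: eventually_elim2)
  ultimately show ?thesis
    by eventually_elim auto
qed

end
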